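(* Let $n\geq 2$ and let $(A,\cdot,[\cdot,\ldots,\cdot])$ be a simple transposed Poisson $n$-Lie algebra. Then the $n$-Lie algebra $(A,[\cdot,\ldots,\cdot])$ is simple.
   Context: An $n$-Lie algebra is a vector space $L$ with an $n$-linear skew-symmetric bracket satisfying $[[x_1,\ldots,x_n],y_2,\ldots,y_n]=\sum_{i=1}^n[x_1,\ldots,x_{i-1},[x_i,y_2,\ldots,y_n],x_{i+1},\ldots,x_n]$; an ideal is a subspace $I$ with $[I,A,\ldots,A]\subseteq I$, and it is simple if $[A,\ldots,A]\neq 0$ and its only ideals are $0$ and $A$. A transposed Poisson $n$-Lie algebra (over $\mathbb{C}$) is a triple $(A,\cdot,[\cdot,\ldots,\cdot])$ where $(A,\cdot)$ is commutative associative, $(A,[\cdot,\ldots,\cdot])$ is an $n$-Lie algebra, and $n\,h\,[a_1,\ldots,a_n]=\sum_{i=1}^n[a_1,\ldots,h a_i,\ldots,a_n]$ for all $h,a_i\in A$. An ideal of it is a subspace $J$ with $A\cdot J\subseteq J$ and $[J,A,\ldots,A]\subseteq J$; it is simple if $[A,\ldots,A]\neq 0$ and its only ideals are $0$ and $A$. *)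

theory Defs
  imports Complex_Main
begin

text \<open>An n-ary bracket is a map B :: (nat => 'a) => 'a whose value depends only on the
arguments at positions 0, ..., n-1 (position i-1 corresponds to x_i in the paper).\<close>

definition n_linear :: "(complex \<Rightarrow> 'a::ab_group_add \<Rightarrow> 'a) \<Rightarrow> nat \<Rightarrow> ((nat \<Rightarrow> 'a) \<Rightarrow> 'a) \<Rightarrow> bool" where
  "n_linear scale n B \<longleftrightarrow>
     (\<forall>f g. (\<forall>i<n. f i = g i) \<longrightarrow> B f = B g) \<and>
     (\<forall>f. \<forall>i<n. Vector_Spaces.linear scale scale (\<lambda>x. B (f(i := x))))"

definition skew_symmetric :: "nat \<Rightarrow> ((nat \<Rightarrow> 'a::ab_group_add) \<Rightarrow> 'a) \<Rightarrow> bool" where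
  "skew_symmetric n B \<longleftrightarrow>
     (\<forall>f i j. i < n \<longrightarrow> j < n \<longrightarrow> i \<noteq> j \<longrightarrow> B (f(i := f j, j := f i)) = - B f)"

text \<open>Filippov identity: [[x_1..x_n], y_2..y_n] = sum_i [x_1,..,[x_i,y_2..y_n],..,x_n];
here y 0 is irrelevant and is overwritten.\<close>
definition filippov :: "nat \<Rightarrow> ((nat \<Rightarrow> 'a::ab_group_add) \<Rightarrow> 'a) \<Rightarrow> bool" where
  "filippov n B \<longleftrightarrow>
     (\<forall>x y. B (y(0 := B x)) = (\<Sum>i<n. B (x(i := B (y(0 := x i))))))"

definition n_Lie_algebra :: "(complex \<Rightarrow> 'a::ab_group_add \<Rightarrow> 'a) \<Rightarrow> nat \<Rightarrow> ((nat \<Rightarrow> 'a) \<Rightarrow> 'a) \<Rightarrow> bool" where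
  "n_Lie_algebra scale n B \<longleftrightarrow>
     vector_space scale \<and> n_linear scale n B \<and> skew_symmetric n B \<and> filippov n B"

definition comm_assoc_algebra :: "(complex \<Rightarrow> 'a::ab_group_add \<Rightarrow> 'a) \<Rightarrow> ('a \<Rightarrow> 'a \<Rightarrow> 'a) \<Rightarrow> bool" where
  "comm_assoc_algebra scale mul \<longleftrightarrow>
     vector_space scale \<and>
     (\<forall>a. Vector_Spaces.linear scale scale (\<lambda>x. mul a x)) \<and>
     (\<forall>a. Vector_Spaces.linear scale scale (\<lambda>x. mul x a)) \<and>
     (\<forall>a b. mul a b = mul b a) \<and>
     (\<forall>a b c. mul (mul a b) c = mul a (mul b c))"

definition transposed_Poisson_n_Lie :: "(complex \<Rightarrow> 'a::ab_group_add \<Rightarrow> 'a) \<Rightarrow> ('a \<Rightarrow> 'a \<Rightarrow> 'a) \<Rightarrow> nat \<Rightarrow> ((nat \<Rightarrow> 'a) \<Rightarrow> 'a) \<Rightarrow> bool" where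
  "transposed_Poisson_n_Lie scale mul n B \<longleftrightarrow>
     comm_assoc_algebra scale mul \<and> n_Lie_algebra scale n B \<and>
     (\<forall>h a. scale (of_nat n) (mul h (B a)) = (\<Sum>i<n. B (a(i := mul h (a i)))))"

definition n_Lie_ideal :: "(complex \<Rightarrow> 'a::ab_group_add \<Rightarrow> 'a) \<Rightarrow> nat \<Rightarrow> ((nat \<Rightarrow> 'a) \<Rightarrow> 'a) \<Rightarrow> 'a set \<Rightarrow> bool" where
  "n_Lie_ideal scale n B I \<longleftrightarrow> module.subspace scale I \<and> (\<forall>f. f 0 \<in> I \<longrightarrow> B f \<in> I)"

definition simple_n_Lie :: "(complex \<Rightarrow> 'a::ab_group_add \<Rightarrow> 'a) \<Rightarrow> nat \<Rightarrow> ((nat \<Rightarrow> 'a) \<Rightarrow> 'a) \<Rightarrow> bool" where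
  "simple_n_Lie scale n B \<longleftrightarrow>
     (\<exists>f. B f \<noteq> 0) \<and> (\<forall>I. n_Lie_ideal scale n B I \<longrightarrow> I = {0} \<or> I = UNIV)"

definition TP_ideal :: "(complex \<Rightarrow> 'a::ab_group_add \<Rightarrow> 'a) \<Rightarrow> ('a \<Rightarrow> 'a \<Rightarrow> 'a) \<Rightarrow> nat \<Rightarrow> ((nat \<Rightarrow> 'a) \<Rightarrow> 'a) \<Rightarrow> 'a set \<Rightarrow> bool" where
  "TP_ideal scale mul n B J \<longleftrightarrow>
     module.subspace scale J \<and> (\<forall>h x. x \<in> J \<longrightarrow> mul h x \<in> J) \<and> (\<forall>f. f 0 \<in> J \<longrightarrow> B f \<in> J)"

definition simple_TP :: "(complex \<Rightarrow> 'a::ab_group_add \<Rightarrow> 'a) \<Rightarrow> ('a \<Rightarrow> 'a \<Rightarrow> 'a) \<Rightarrow> nat \<Rightarrow> ((nat \<Rightarrow> 'a) \<Rightarrow> 'a) \<Rightarrow> bool" where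
  "simple_TP scale mul n B \<longleftrightarrow>
     (\<exists>f. B f \<noteq> 0) \<and> (\<forall>J. TP_ideal scale mul n B J \<longrightarrow> J = {0} \<or> J = UNIV)"

end

theory Submission
  imports Defs
begin

text \<open>Let \<open>I\<close> be a nonzero ideal of the \<open>n\<close>-Lie algebra. For \<open>y \<in> I\<close> the transposed Poisson
identity gives \<open>n h[\<dots>, y, \<dots>] \<equiv> [\<dots>, h y, \<dots>] (mod I)\<close>. Consequently the span of
\<open>I \<union> A I\<close> and the span of all brackets are ideals of the transposed Poisson algebra, hence
both equal \<open>A\<close>. Now split the Filippov identity \<open>[[x\<^sub>1, \<dots>, x\<^sub>n], y] = \<Sum>\<^sub>i [x\<^sub>1, \<dots>, [x\<^sub>i, y], \<dots>, x\<^sub>n]\<close>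
into its \<open>j\<close>-th term and the rest \<open>T\<close>. Since \<open>T\<close> is linear in \<open>x\<^sub>j\<close> and \<open>A = span (I \<union> A I)\<close>,
it suffices to treat \<open>x\<^sub>j \<in> I\<close> (trivial) and \<open>x\<^sub>j = h x\<close> with \<open>x \<in> I\<close>, where applying the
congruence twice on both sides of the Filippov identity yields \<open>T \<equiv> n T\<close>, so \<open>T \<in> I\<close>.
Summing over \<open>j\<close> gives \<open>(n - 1) [[x], y] \<in> I\<close>; as the brackets span \<open>A\<close>, all brackets
lie in \<open>I\<close> and thus \<open>I = A\<close>.\<close>

context vector_space
begin

lemma linear_in_subspace_on_span:
  assumes "Vector_Spaces.linear (*s) (*s) f" and "subspace S"
    and "\<And>g. g \<in> G \<Longrightarrow> f g \<in> S" and "x \<in> span G"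
  shows "f x \<in> S"
proof -
  have "span G \<subseteq> f -` S"
    using assms by (intro span_minimal module_hom.subspace_vimage) (auto simp: module_hom_iff_linear)
  with assms(4) show ?thesis by blast
qed

lemma mem_subspace_if_scale_mem: "subspace S \<Longrightarrow> c \<noteq> 0 \<Longrightarrow> c *s x \<in> S \<Longrightarrow> x \<in> S"
  by (metis scale_one scale_scale subspace_scale left_inverse)

end

locale n_Lie_alg =
  fixes scale :: "complex \<Rightarrow> 'a::ab_group_add \<Rightarrow> 'a" (infixr \<open>*s\<close> 75)
    and n :: nat
    and B :: "(nat \<Rightarrow> 'a) \<Rightarrow> 'a"
  assumes n_Lie_algebra: "n_Lie_algebra scale n B"
begin

sublocale vector_space scale
  using n_Lie_algebra by (simp add: n_Lie_algebra_def)

lemma linear_bracket_slot: "i < n \<Longrightarrow> Vector_Spaces.linear (*s) (*s) (\<lambda>x. B (f(i := x)))"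
  using n_Lie_algebra by (simp add: n_Lie_algebra_def n_linear_def)

lemma module_hom_bracket_slot: "i < n \<Longrightarrow> module_hom (*s) (*s) (\<lambda>x. B (f(i := x)))"
  by (rule module_hom_linearI[OF linear_bracket_slot])

lemma bracket_add: "i < n \<Longrightarrow> B (f(i := x + y)) = B (f(i := x)) + B (f(i := y))"
  by (rule module_hom.add[OF module_hom_bracket_slot])

lemma bracket_diff: "i < n \<Longrightarrow> B (f(i := x - y)) = B (f(i := x)) - B (f(i := y))"
  by (rule module_hom.diff[OF module_hom_bracket_slot])

lemma bracket_scale: "i < n \<Longrightarrow> B (f(i := c *s x)) = c *s B (f(i := x))"
  by (rule module_hom.scale[OF module_hom_bracket_slot])

lemma bracket_swap: "i < n \<Longrightarrow> j < n \<Longrightarrow> i \<noteq> j \<Longrightarrow> B (f(i := f j, j := f i)) = - B f"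
  using n_Lie_algebra by (simp add: n_Lie_algebra_def skew_symmetric_def)

definition filippov_omit :: "(nat \<Rightarrow> 'a) \<Rightarrow> (nat \<Rightarrow> 'a) \<Rightarrow> nat \<Rightarrow> 'a" where
  "filippov_omit y x j = (\<Sum>i\<in>{..<n} - {j}. B (x(i := B (y(0 := x i)))))"

lemma filippov_identity: "B (y(0 := B x)) = (\<Sum>i<n. B (x(i := B (y(0 := x i)))))"
  using n_Lie_algebra by (simp add: n_Lie_algebra_def filippov_def)

lemma filippov_split:
  assumes "j < n"
  shows "B (y(0 := B x)) = B (x(j := B (y(0 := x j)))) + filippov_omit y x j"
proof -
  have "B (y(0 := B x)) = (\<Sum>i<n. B (x(i := B (y(0 := x i)))))"
    by (rule filippov_identity)
  also have "\<dots> = B (x(j := B (y(0 := x j)))) + filippov_omit y x j"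
    unfolding filippov_omit_def using assms by (intro sum.remove) auto
  finally show ?thesis .
qed

lemma filippov_omit_upd:
  "filippov_omit y (x(j := v)) j = (\<Sum>i\<in>{..<n} - {j}. B ((x(i := B (y(0 := x i))))(j := v)))"
  unfolding filippov_omit_def by (intro sum.cong refl arg_cong[where f = B]) auto

lemma linear_filippov_omit:
  assumes "j < n"
  shows "Vector_Spaces.linear (*s) (*s) (\<lambda>v. filippov_omit y (x(j := v)) j)"
  using assms by (simp add: Vector_Spaces.linear_iff filippov_omit_upd bracket_add bracket_scale
      sum.distrib scale_sum_right vector_space_axioms)

end

locale TP_n_Lie_alg =
  fixes scale :: "complex \<Rightarrow> 'a::ab_group_add \<Rightarrow> 'a" (infixr \<open>*s\<close> 75)
    and mul :: "'a \<Rightarrow> 'a \<Rightarrow> 'a" (infixl \<open>\<cdot>\<close> 70)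
    and n :: nat
    and B :: "(nat \<Rightarrow> 'a) \<Rightarrow> 'a"
  assumes transposed_Poisson: "transposed_Poisson_n_Lie scale mul n B"
begin

sublocale n_Lie_alg scale n B
  using transposed_Poisson by unfold_locales (simp add: transposed_Poisson_n_Lie_def)

lemma linear_mul: "Vector_Spaces.linear (*s) (*s) (\<lambda>x. h \<cdot> x)"
  using transposed_Poisson by (simp add: transposed_Poisson_n_Lie_def comm_assoc_algebra_def)

lemma mul_add: "h \<cdot> (x + y) = h \<cdot> x + h \<cdot> y"
  and mul_sum: "h \<cdot> (\<Sum>i\<in>S. f i) = (\<Sum>i\<in>S. h \<cdot> f i)"
  using module_hom_linearI[OF linear_mul[of h]]
  by (simp_all add: module_hom.add module_hom.sum)

lemma mul_assoc: "(h \<cdot> k) \<cdot> x = h \<cdot> (k \<cdot> x)"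
  using transposed_Poisson unfolding transposed_Poisson_n_Lie_def comm_assoc_algebra_def by blast

lemma transposed_Poisson_identity: "of_nat n *s (h \<cdot> B x) = (\<Sum>i<n. B (x(i := h \<cdot> x i)))"
  using transposed_Poisson by (simp add: transposed_Poisson_n_Lie_def)

lemma TP_ideal_span_brackets:
  assumes "0 < n"
  shows "TP_ideal scale mul n B (span (range B))"
  unfolding TP_ideal_def
proof (intro conjI allI impI)
  fix h x
  assume "x \<in> span (range B)"
  then show "h \<cdot> x \<in> span (range B)"
  proof (rule linear_in_subspace_on_span[OF linear_mul subspace_span, rotated])
    fix g assume "g \<in> range B"
    then obtain f where "g = B f" by blast
    have "of_nat n *s (h \<cdot> B f) \<in> span (range B)"
      unfolding transposed_Poisson_identity by (intro span_sum span_base rangeI)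
    then have "h \<cdot> B f \<in> span (range B)"
      by (rule mem_subspace_if_scale_mem[OF subspace_span, rotated]) (use assms in simp)
    with \<open>g = B f\<close> show "h \<cdot> g \<in> span (range B)" by simp
  qed
qed (auto intro: span_base)

lemma span_brackets_eq_UNIV:
  assumes "0 < n" and "simple_TP scale mul n B"
  shows "span (range B) = UNIV"
proof -
  from assms(2) obtain f where "B f \<noteq> 0" by (auto simp: simple_TP_def)
  then have "span (range B) \<noteq> {0}" by (metis rangeI singletonD span_base)
  with assms show ?thesis
    using TP_ideal_span_brackets by (auto simp: simple_TP_def)
qed

end

locale TP_n_Lie_ideal = TP_n_Lie_alg +
  fixes I :: "'a set"
  assumes n_Lie_ideal: "n_Lie_ideal scale n B I"
begin

lemma subspace_ideal: "subspace I"
  using n_Lie_ideal by (simp add: n_Lie_ideal_def)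

lemma bracket_mem_ideal:
  assumes "j < n" and "f j \<in> I"
  shows "B f \<in> I"
proof (cases "j = 0")
  case True
  with n_Lie_ideal \<open>f j \<in> I\<close> show ?thesis by (simp add: n_Lie_ideal_def)
next
  case False
  have "B (f(0 := f j, j := f 0)) \<in> I"
    using n_Lie_ideal \<open>f j \<in> I\<close> False by (simp add: n_Lie_ideal_def)
  moreover have "B (f(0 := f j, j := f 0)) = - B f"
    using bracket_swap False \<open>j < n\<close> by simp
  ultimately have "- (- B f) \<in> I"
    by (metis subspace_neg[OF subspace_ideal])
  then show ?thesis by simp
qed

text \<open>Multiplication does not respect this congruence: \<open>I\<close> need not be closed under \<open>(\<cdot>)\<close>.\<close>

definition cong_ideal :: "'a \<Rightarrow> 'a \<Rightarrow> bool" (infix \<open>\<equiv>\<^sub>I\<close> 50) where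
  "x \<equiv>\<^sub>I y \<longleftrightarrow> x - y \<in> I"

lemma cong_ideal_sym: "x \<equiv>\<^sub>I y \<Longrightarrow> y \<equiv>\<^sub>I x"
  unfolding cong_ideal_def using subspace_neg[OF subspace_ideal] by fastforce

lemma cong_ideal_trans [trans]: "x \<equiv>\<^sub>I y \<Longrightarrow> y \<equiv>\<^sub>I z \<Longrightarrow> x \<equiv>\<^sub>I z"
  unfolding cong_ideal_def using subspace_add[OF subspace_ideal, of "x - y" "y - z"] by simp

lemma cong_ideal_diff: "x \<equiv>\<^sub>I y \<Longrightarrow> x' \<equiv>\<^sub>I y' \<Longrightarrow> x - x' \<equiv>\<^sub>I y - y'"
  unfolding cong_ideal_def using subspace_diff[OF subspace_ideal, of "x - y" "x' - y'"]
  by (simp add: algebra_simps)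

lemma cong_ideal_scale: "x \<equiv>\<^sub>I y \<Longrightarrow> c *s x \<equiv>\<^sub>I c *s y"
  unfolding cong_ideal_def using subspace_scale[OF subspace_ideal, of "x - y" c]
  by (simp add: scale_right_diff_distrib)

lemma cong_ideal_sum: "(\<And>i. i \<in> S \<Longrightarrow> f i \<equiv>\<^sub>I g i) \<Longrightarrow> (\<Sum>i\<in>S. f i) \<equiv>\<^sub>I (\<Sum>i\<in>S. g i)"
  unfolding cong_ideal_def sum_subtractf[symmetric] by (rule subspace_sum[OF subspace_ideal])

lemma cong_ideal_bracket: "j < n \<Longrightarrow> x \<equiv>\<^sub>I y \<Longrightarrow> B (f(j := x)) \<equiv>\<^sub>I B (f(j := y))"
  unfolding cong_ideal_def bracket_diff[symmetric] by (rule bracket_mem_ideal) auto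

lemma mem_ideal_if_cong_scale:
  assumes "c \<noteq> 1" and "x \<equiv>\<^sub>I c *s x"
  shows "x \<in> I"
proof (rule mem_subspace_if_scale_mem[OF subspace_ideal])
  show "1 - c \<noteq> 0" using assms(1) by simp
  show "(1 - c) *s x \<in> I"
    using assms(2) by (simp add: cong_ideal_def scale_left_diff_distrib)
qed

lemma transposed_Poisson_cong:
  assumes "j < n" and "y \<in> I"
  shows "of_nat n *s (h \<cdot> B (f(j := y))) \<equiv>\<^sub>I B (f(j := h \<cdot> y))"
proof -
  have "of_nat n *s (h \<cdot> B (f(j := y))) - B (f(j := h \<cdot> y))
      = (\<Sum>i\<in>{..<n} - {j}. B ((f(j := y))(i := h \<cdot> (f(j := y)) i)))"
    unfolding transposed_Poisson_identity using \<open>j < n\<close> by (subst sum.remove[of _ j]) auto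
  also have "\<dots> \<in> I"
    using assms by (intro subspace_sum[OF subspace_ideal] bracket_mem_ideal[of j]) auto
  finally show ?thesis unfolding cong_ideal_def .
qed

lemma transposed_Poisson_cong_nested:
  assumes "j < n" and "k < n" and "x \<in> I"
  shows "B (g(k := B (f(j := h \<cdot> x)))) \<equiv>\<^sub>I of_nat n *s of_nat n *s (h \<cdot> B (g(k := B (f(j := x)))))"
proof -
  have "B (f(j := x)) \<in> I"
    using assms(1,3) by (intro bracket_mem_ideal[of j]) simp_all
  have "B (g(k := B (f(j := h \<cdot> x)))) \<equiv>\<^sub>I B (g(k := of_nat n *s (h \<cdot> B (f(j := x)))))"
    by (rule cong_ideal_bracket[OF assms(2) cong_ideal_sym[OF transposed_Poisson_cong[OF assms(1,3)]]])
  also have "\<dots> = of_nat n *s B (g(k := h \<cdot> B (f(j := x))))"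
    using assms(2) by (rule bracket_scale)
  also have "\<dots> \<equiv>\<^sub>I of_nat n *s of_nat n *s (h \<cdot> B (g(k := B (f(j := x)))))"
    by (rule cong_ideal_scale[OF cong_ideal_sym[OF transposed_Poisson_cong[OF assms(2) \<open>B (f(j := x)) \<in> I\<close>]]])
  finally show ?thesis .
qed

lemma TP_ideal_span_multiples:
  assumes "0 < n"
  shows "TP_ideal scale mul n B (span (I \<union> {h \<cdot> x |h x. x \<in> I}))" (is "TP_ideal _ _ _ _ (span ?G)")
proof -
  have I_span: "I \<subseteq> span ?G" using span_superset by blast
  have mul_closed: "h \<cdot> v \<in> span ?G" if "v \<in> span ?G" for h v
    using that
  proof (rule linear_in_subspace_on_span[OF linear_mul subspace_span, rotated])
    fix g assume "g \<in> ?G"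
    then have "h \<cdot> g \<in> ?G" by (auto simp flip: mul_assoc)
    then show "h \<cdot> g \<in> span ?G" by (rule span_base)
  qed
  have bracket_closed: "B f \<in> span ?G" if "f 0 \<in> span ?G" for f :: "nat \<Rightarrow> 'a"
  proof -
    have "B (f(0 := f 0)) \<in> span ?G"
      using that
    proof (rule linear_in_subspace_on_span[OF linear_bracket_slot[OF assms] subspace_span, rotated])
      fix g assume "g \<in> ?G"
      then consider "g \<in> I" | h x where "g = h \<cdot> x" and "x \<in> I" by blast
      then show "B (f(0 := g)) \<in> span ?G"
      proof cases
        case 1
        then show ?thesis using I_span bracket_mem_ideal[OF assms] by auto
      next
        case 2
        have "B (f(0 := x)) \<in> I"
          using 2 by (intro bracket_mem_ideal[OF assms]) simp
        then have "of_nat n *s (h \<cdot> B (f(0 := x))) \<in> span ?G"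
          by (intro span_scale span_base) blast
        moreover have "of_nat n *s (h \<cdot> B (f(0 := x))) - B (f(0 := g)) \<in> span ?G"
          using transposed_Poisson_cong[OF assms 2(2)] 2(1) I_span by (auto simp: cong_ideal_def)
        ultimately show ?thesis using span_diff by fastforce
      qed
    qed
    then show ?thesis by simp
  qed
  show ?thesis
    unfolding TP_ideal_def using mul_closed bracket_closed by simp
qed

lemma span_multiples_eq_UNIV:
  assumes "0 < n" and "simple_TP scale mul n B" and "I \<noteq> {0}"
  shows "span (I \<union> {h \<cdot> x |h x. x \<in> I}) = UNIV"
proof -
  have "I \<subseteq> span (I \<union> {h \<cdot> x |h x. x \<in> I})" using span_superset by blast
  with assms(3) subspace_0[OF subspace_ideal]
  have "span (I \<union> {h \<cdot> x |h x. x \<in> I}) \<noteq> {0}" by blast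
  with assms(2) TP_ideal_span_multiples[OF assms(1)] show ?thesis
    by (auto simp: simple_TP_def)
qed

text \<open>With \<open>Y = X(j := x)\<close> and \<open>U = X(j := h x)\<close>, let \<open>T\<close> and \<open>S\<close> be the Filippov sums of
\<open>[[U], y]\<close> and \<open>[[Y], y]\<close> without their \<open>j\<close>-th terms. Modulo \<open>I\<close>, both \<open>[[U], y]\<close> and its
\<open>j\<close>-th term are \<open>n\<^sup>2 h\<close> times those of \<open>Y\<close> (\<open>transposed_Poisson_cong_nested\<close>), whence \<open>T \<equiv> n\<^sup>2 h S\<close>; termwise \<open>T \<equiv> n h S\<close>, so \<open>T \<equiv> n T\<close>.\<close>

lemma filippov_omit_multiple_mem:
  assumes "2 \<le> n" and "j < n" and "x \<in> I"
  shows "filippov_omit y (X(j := h \<cdot> x)) j \<in> I"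
proof -
  let ?c = "of_nat n :: complex"
  define Y where "Y = X(j := x)"
  define U where "U = X(j := h \<cdot> x)"
  define T where "T = filippov_omit y U j"
  have "0 < n" using assms(1) by simp
  have T_cong: "T \<equiv>\<^sub>I ?c *s (h \<cdot> filippov_omit y Y j)"
    unfolding T_def filippov_omit_def mul_sum scale_sum_right
  proof (rule cong_ideal_sum)
    fix i assume "i \<in> {..<n} - {j}"
    then have "U(i := B (y(0 := U i))) = (X(i := B (y(0 := X i))))(j := h \<cdot> x)"
      and "Y(i := B (y(0 := Y i))) = (X(i := B (y(0 := X i))))(j := x)"
      by (auto simp: U_def Y_def fun_upd_twist)
    then show "B (U(i := B (y(0 := U i)))) \<equiv>\<^sub>I ?c *s (h \<cdot> B (Y(i := B (y(0 := Y i)))))"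
      by (metis cong_ideal_sym transposed_Poisson_cong[OF assms(2,3)])
  qed
  have bracket_U: "B (y(0 := B U)) \<equiv>\<^sub>I ?c *s ?c *s (h \<cdot> B (y(0 := B Y)))"
    unfolding U_def Y_def by (rule transposed_Poisson_cong_nested[OF assms(2) \<open>0 < n\<close> assms(3)])
  have bracket_U_j: "B (X(j := B (y(0 := h \<cdot> x)))) \<equiv>\<^sub>I ?c *s ?c *s (h \<cdot> B (X(j := B (y(0 := x)))))"
    by (rule transposed_Poisson_cong_nested[OF \<open>0 < n\<close> assms(2) assms(3)])
  have split_U: "B (y(0 := B U)) = B (X(j := B (y(0 := h \<cdot> x)))) + T"
    using filippov_split[OF assms(2), of y U] by (simp add: T_def U_def)
  have split_Y: "B (y(0 := B Y)) = B (X(j := B (y(0 := x)))) + filippov_omit y Y j"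
    using filippov_split[OF assms(2), of y Y] by (simp add: Y_def)
  have "T = B (y(0 := B U)) - B (X(j := B (y(0 := h \<cdot> x))))"
    by (simp add: split_U)
  also have "\<dots> \<equiv>\<^sub>I ?c *s ?c *s (h \<cdot> B (y(0 := B Y))) - ?c *s ?c *s (h \<cdot> B (X(j := B (y(0 := x)))))"
    using bracket_U bracket_U_j by (rule cong_ideal_diff)
  also have "\<dots> = ?c *s ?c *s (h \<cdot> filippov_omit y Y j)"
    by (simp add: split_Y mul_add scale_right_distrib)
  also have "\<dots> \<equiv>\<^sub>I ?c *s T"
    using T_cong by (rule cong_ideal_scale[OF cong_ideal_sym])
  finally have "T \<in> I"
    by (rule mem_ideal_if_cong_scale[rotated]) (use assms(1) in simp)
  then show ?thesis by (simp add: T_def U_def)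
qed

context
  assumes n_ge_2: "2 \<le> n"
    and span_multiples: "span (I \<union> {h \<cdot> x |h x. x \<in> I}) = UNIV"
begin

lemma filippov_omit_mem:
  assumes "j < n"
  shows "filippov_omit y X j \<in> I"
proof -
  have generators: "filippov_omit y (X(j := v)) j \<in> I" if "v \<in> I \<union> {h \<cdot> x |h x. x \<in> I}" for v
  proof -
    from that consider "v \<in> I" | h x where "v = h \<cdot> x" and "x \<in> I" by blast
    then show ?thesis
    proof cases
      case 1
      then show ?thesis
        unfolding filippov_omit_upd using assms
        by (intro subspace_sum[OF subspace_ideal] bracket_mem_ideal[of j]) auto
    next
      case 2
      then show ?thesis using filippov_omit_multiple_mem[OF n_ge_2 assms] by simp
    qed
  qed
  have "X j \<in> span (I \<union> {h \<cdot> x |h x. x \<in> I})" using span_multiples by simp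
  from linear_in_subspace_on_span[OF linear_filippov_omit[OF assms] subspace_ideal generators this]
  show ?thesis by simp
qed

lemma bracket_bracket_mem: "B (y(0 := B X)) \<in> I"
proof (rule mem_ideal_if_cong_scale)
  show "of_nat n \<noteq> (1 :: complex)" using n_ge_2 by simp
  let ?S = "B (y(0 := B X))"
  have "of_nat n *s ?S = (\<Sum>j<n. ?S)"
    by (simp add: sum_constant_scale)
  also have "\<dots> = (\<Sum>j<n. B (X(j := B (y(0 := X j)))) + filippov_omit y X j)"
    by (intro sum.cong refl filippov_split) simp
  also have "\<dots> = ?S + (\<Sum>j<n. filippov_omit y X j)"
    by (simp add: sum.distrib filippov_identity)
  finally have "?S - of_nat n *s ?S = - (\<Sum>j<n. filippov_omit y X j)" by simp
  moreover have "(\<Sum>j<n. filippov_omit y X j) \<in> I"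
    using filippov_omit_mem by (intro subspace_sum[OF subspace_ideal]) simp
  ultimately show "?S \<equiv>\<^sub>I of_nat n *s ?S"
    unfolding cong_ideal_def using subspace_neg[OF subspace_ideal] by simp
qed

lemma ideal_eq_UNIV:
  assumes "span (range B) = UNIV"
  shows "I = UNIV"
proof -
  have "B f \<in> I" for f
  proof -
    have "0 < n" using n_ge_2 by simp
    have "B (f(0 := g)) \<in> I" if "g \<in> range B" for g
      using that bracket_bracket_mem by auto
    moreover have "f 0 \<in> span (range B)" using assms by simp
    ultimately have "B (f(0 := f 0)) \<in> I"
      by (rule linear_in_subspace_on_span[OF linear_bracket_slot[OF \<open>0 < n\<close>] subspace_ideal])
    then show ?thesis by simp
  qed
  then have "span (range B) \<subseteq> I" by (intro span_minimal subspace_ideal) auto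
  with assms show ?thesis by blast
qed

end

end

theorem mainTheorem6:
  fixes scale :: "complex \<Rightarrow> 'a::ab_group_add \<Rightarrow> 'a"
    and mul :: "'a \<Rightarrow> 'a \<Rightarrow> 'a"
    and B :: "(nat \<Rightarrow> 'a) \<Rightarrow> 'a"
    and n :: nat
  assumes "n \<ge> 2"
    and "transposed_Poisson_n_Lie scale mul n B"
    and "simple_TP scale mul n B"
  shows "simple_n_Lie scale n B"
proof -
  interpret TP_n_Lie_alg scale mul n B by (rule TP_n_Lie_alg.intro) (fact assms(2))
  have "0 < n" using assms(1) by simp
  have brackets_span: "span (range B) = UNIV"
    using span_brackets_eq_UNIV[OF \<open>0 < n\<close> assms(3)] .
  have "I = {0} \<or> I = UNIV" if "n_Lie_ideal scale n B I" for I
  proof (cases "I = {0}")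
    case False
    interpret TP_n_Lie_ideal scale mul n B I
      using assms(2) that by (intro TP_n_Lie_ideal.intro TP_n_Lie_alg.intro TP_n_Lie_ideal_axioms.intro)
    show ?thesis
      using ideal_eq_UNIV[OF assms(1) span_multiples_eq_UNIV[OF \<open>0 < n\<close> assms(3) False] brackets_span]
      by simp
  qed simp
  with assms(3) show ?thesis by (auto simp: simple_n_Lie_def simple_TP_def)
qed

end
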